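(* Assume $\mathbf 1\in\Sigma^\circ$. Let $\mathbf t\in\mathcal V$ and $c^*\in\mathbb R$ be such that $\mathbf t-c^*\mathbf 1$ lies on the boundary of $\Sigma$, let $c<c^*$, and let $\mathbf y$ denote the gradient certificate of $\mathbf t-c\mathbf 1$. Then there exists a constant $C>0$, depending only on the operator $\Lambda$ (and not on $\mathbf t$ or $c$), such that \[ c^*-c\ \le\ \left(C\,\|\mathbf 1\|^*_{\mathbf y}\right)^{-1}. \]
   Context: Fix nonzero real polynomials $g_1,\dots,g_m$ in $n$ variables and nonnegative integers $d_1,\dots,d_m$. Let $\mathcal V$ be the real vector space of polynomials $\sum_{i=1}^m g_i r_i$ with $\deg r_i\le 2d_i$, and $\Sigma\subseteq\mathcal V$ the cone of weighted sums of squares $\sum_i g_i\sigma_i$ with each $\sigma_i$ a sum of squares of polynomials of degree at most $d_i$; assume $\Sigma$ is a proper cone. Fix a basis $\mathbf q=(q_1,\dots,q_U)$ of $\mathcal V$, identify $\mathcal V$ and its dual with $\mathbb R^U$ with the standard inner product and Euclidean norm $\|\cdot\|$; $\Sigma^*$ is the dual cone, $K^\circ$ the interior of $K$; $\mathbf 1$ is the coefficient vector of the constant polynomial $1$. For each $i$ fix a basis $\mathbf p_i$ (of size $L_i$) of polynomials of degree at most $d_i$ and let $\Lambda_i:\mathbb R^U\to\mathbb S^{L_i}$ be the unique linear map with $\sum_u q_u\Lambda_i(\mathbf e_u)=g_i\mathbf p_i\mathbf p_i^T$; $\Lambda=\Lambda_1\oplus\cdots\oplus\Lambda_m$ (block diagonal),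 $\Lambda^*$ its adjoint; $(\Sigma^* )^\circ=\{\mathbf x:\Lambda(\mathbf x)\succ0\}$. On $(\Sigma^* )^\circ$ let $f(\mathbf x)=-\ln\det\Lambda(\mathbf x)$, with gradient $g(\mathbf x)=-\Lambda^*(\Lambda(\mathbf x)^{-1})$ and Hessian $H(\mathbf x)\mathbf w=\Lambda^*(\Lambda(\mathbf x)^{-1}\Lambda(\mathbf w)\Lambda(\mathbf x)^{-1})$. Dual local norm $\|\mathbf s\|^*_{\mathbf x}=\|H(\mathbf x)^{-1/2}\mathbf s\|$. For $\mathbf s\in\Sigma^\circ$, the gradient certificate of $\mathbf s$ is the unique $\mathbf y\in(\Sigma^* )^\circ$ with $-g(\mathbf y)=\mathbf s$. *)

theory Defs
  imports "HOL-Analysis.Analysis" "HOL-Library.Poly_Mapping"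
begin

text \<open>Real polynomials in the variables x_0, x_1, ...: finitely supported maps from
monomials (exponent vectors, nat =>0 nat) to real coefficients.\<close>
type_synonym rpoly = "(nat \<Rightarrow>\<^sub>0 nat) \<Rightarrow>\<^sub>0 real"

definition pconst :: "real \<Rightarrow> rpoly" where
  "pconst c = Poly_Mapping.single 0 c"

definition mon_deg :: "(nat \<Rightarrow>\<^sub>0 nat) \<Rightarrow> nat" where
  "mon_deg \<alpha> = (\<Sum>j\<in>Poly_Mapping.keys \<alpha>. Poly_Mapping.lookup \<alpha> j)"

text \<open>total degree (degree of the zero polynomial is taken to be 0)\<close>
definition tdeg :: "rpoly \<Rightarrow> nat" where
  "tdeg f = (if f = 0 then 0 else Max (mon_deg ` Poly_Mapping.keys f))"

definition in_vars :: "nat \<Rightarrow> rpoly \<Rightarrow> bool" where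
  "in_vars n f \<longleftrightarrow> (\<forall>\<alpha>\<in>Poly_Mapping.keys f. Poly_Mapping.keys \<alpha> \<subseteq> {..<n})"

definition polys_le :: "nat \<Rightarrow> nat \<Rightarrow> rpoly set" where
  "polys_le n k = {f. in_vars n f \<and> tdeg f \<le> k}"

definition sos_le :: "nat \<Rightarrow> nat \<Rightarrow> rpoly set" where
  "sos_le n k = {\<sigma>. \<exists>hs. set hs \<subseteq> polys_le n k \<and> \<sigma> = sum_list (map (\<lambda>h. h * h) hs)}"

definition Vspace :: "nat \<Rightarrow> nat \<Rightarrow> (nat \<Rightarrow> rpoly) \<Rightarrow> (nat \<Rightarrow> nat) \<Rightarrow> rpoly set" where
  "Vspace n m g d = {f. \<exists>r. (\<forall>i<m. r i \<in> polys_le n (2 * d i)) \<and> f = (\<Sum>i<m. g i * r i)}"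

definition WSOS :: "nat \<Rightarrow> nat \<Rightarrow> (nat \<Rightarrow> rpoly) \<Rightarrow> (nat \<Rightarrow> nat) \<Rightarrow> rpoly set" where
  "WSOS n m g d = {f. \<exists>\<sigma>. (\<forall>i<m. \<sigma> i \<in> sos_le n (d i)) \<and> f = (\<Sum>i<m. g i * \<sigma> i)}"

definition of_coeffs :: "('u::finite \<Rightarrow> rpoly) \<Rightarrow> real^'u \<Rightarrow> rpoly" where
  "of_coeffs q x = (\<Sum>u\<in>UNIV. pconst (x $ u) * q u)"

text \<open>Sigma identified with a subset of R^U via the basis q\<close>
definition Sigma_vec :: "nat \<Rightarrow> nat \<Rightarrow> (nat \<Rightarrow> rpoly) \<Rightarrow> (nat \<Rightarrow> nat) \<Rightarrow> ('u::finite \<Rightarrow> rpoly)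
    \<Rightarrow> (real^'u) set" where
  "Sigma_vec n m g d q = {x. of_coeffs q x \<in> WSOS n m g d}"

definition dual_cone :: "(real^'u::finite) set \<Rightarrow> (real^'u) set" where
  "dual_cone K = {y. \<forall>x\<in>K. 0 \<le> y \<bullet> x}"

definition proper_cone :: "(real^'u::finite) set \<Rightarrow> bool" where
  "proper_cone K \<longleftrightarrow> convex K \<and> cone K \<and> closed K \<and> interior K \<noteq> {} \<and> K \<inter> uminus ` K = {0}"

text \<open>Lambda is represented by its values A u = Lambda(e_u), a block-diagonal matrix indexed
by 'l, where index a belongs to block blk a.  Lambda(x) = sum_u x_u A_u.\<close>
definition Lam :: "('u::finite \<Rightarrow> real^'l::finite^'l) \<Rightarrow> real^'u \<Rightarrow> real^'l^'l" where
  "Lam A x = (\<Sum>u\<in>UNIV. x $ u *\<^sub>R A u)"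

text \<open>adjoint w.r.t. the trace inner product\<close>
definition Lam_adj :: "('u::finite \<Rightarrow> real^'l::finite^'l) \<Rightarrow> real^'l^'l \<Rightarrow> real^'u" where
  "Lam_adj A S = (\<chi> u. \<Sum>a\<in>UNIV. \<Sum>b\<in>UNIV. A u $ a $ b * S $ a $ b)"

text \<open>barrier f(x) = - ln det Lambda(x), gradient and Hessian (as given in the paper)\<close>
definition barrier :: "('u::finite \<Rightarrow> real^'l::finite^'l) \<Rightarrow> real^'u \<Rightarrow> real" where
  "barrier A x = - ln (det (Lam A x))"

definition grad :: "('u::finite \<Rightarrow> real^'l::finite^'l) \<Rightarrow> real^'u \<Rightarrow> real^'u" where
  "grad A x = - Lam_adj A (matrix_inv (Lam A x))"

definition hess_apply :: "('u::finite \<Rightarrow> real^'l::finite^'l) \<Rightarrow> real^'u \<Rightarrow> real^'u \<Rightarrow> real^'u" where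
  "hess_apply A x w = Lam_adj A (matrix_inv (Lam A x) ** Lam A w ** matrix_inv (Lam A x))"

definition hess :: "('u::finite \<Rightarrow> real^'l::finite^'l) \<Rightarrow> real^'u \<Rightarrow> real^'u^'u" where
  "hess A x = (\<chi> u v. hess_apply A x (axis v 1) $ u)"

definition dual_norm :: "('u::finite \<Rightarrow> real^'l::finite^'l) \<Rightarrow> real^'u \<Rightarrow> real^'u \<Rightarrow> real" where
  "dual_norm A x s = sqrt (s \<bullet> (matrix_inv (hess A x) *v s))"

end

theory Submission
  imports Defs
begin

(* Write M = Lam(y), so that t - c 1 = -grad(y) = Lam^*(M^-1). Pairing with y gives
   <y, t - c 1> = tr(M M^-1) = |L|, while t - c^* 1 lies in Sigma and y in the dual cone, so
   (c^* - c) <y, 1> <= |L|. It remains to bound ||1||^*_y by <y, 1>. The cone Sigma is generated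
   by the vectors Lam^*(v v^T), the coefficient vectors of sum_i g_i (v_i^T p_i)^2. Factoring
   M = R^T R, one has <w, H(y) w> = ||R^-T Lam(w) R^-1||_F^2, and by Cauchy-Schwarz
   v^T Lam(w) v <= ||R^-T Lam(w) R^-1||_F v^T M v. Taking w = H(y)^-1 1 and summing over a
   decomposition of 1 into generators gives ||1||^*_y <= <y, 1>, so C = 1/|L| works. *)

section \<open>Frobenius inner product and matrix inverses\<close>

definition outer :: "real^'n::finite \<Rightarrow> real^'n \<Rightarrow> real^'n^'n" where
  "outer u v = (\<chi> a b. u$a * v$b)"

lemma inner_outer: "(X::real^'n::finite^'n) \<bullet> outer u v = u \<bullet> (X *v v)"
  by (simp add: inner_vec_def outer_def matrix_vector_mult_def sum_distrib_left mult_ac)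

lemma norm_outer_self: "norm (outer (v::real^'n::finite) v) = v \<bullet> v"
proof -
  have "outer v v \<bullet> outer v v = (v \<bullet> v) * (v \<bullet> v)"
    by (simp add: inner_vec_def outer_def sum_distrib_left sum_distrib_right mult_ac)
  then show ?thesis by (simp add: norm_eq_sqrt_inner real_sqrt_mult)
qed

lemma inner_transpose_matrix_vector: "(x::real^'n::finite) \<bullet> (transpose R *v y) = (R *v x) \<bullet> y"
  by (metis dot_lmul_matrix inner_commute transpose_matrix_vector)

lemma inner_matrix_eq_trace: "(X::real^'n::finite^'m::finite) \<bullet> Y = trace (transpose X ** Y)"
  unfolding inner_vec_def trace_def matrix_matrix_mult_def transpose_def
  by (simp add: sum.swap[of _ "UNIV::'m set"])

lemma inner_matrix_mult_left: "(X::real^'n::finite^'n) \<bullet> (B ** C) = (transpose B ** X) \<bullet> C"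
  by (simp add: inner_matrix_eq_trace matrix_transpose_mul matrix_mul_assoc)

lemma inner_matrix_mult_right: "(X::real^'n::finite^'n) \<bullet> (B ** C) = (X ** transpose C) \<bullet> B"
  by (simp add: inner_matrix_eq_trace matrix_transpose_mul matrix_mul_assoc)
    (metis matrix_mul_assoc trace_mul_sym)

lemma matrix_inv_mult:
  assumes "invertible (M::real^'n::finite^'n)"
  shows "M ** matrix_inv M = mat 1" "matrix_inv M ** M = mat 1"
proof -
  from assms obtain B where "M ** B = mat 1 \<and> B ** M = mat 1" unfolding invertible_def by blast
  then have "M ** matrix_inv M = mat 1 \<and> matrix_inv M ** M = mat 1"
    unfolding matrix_inv_def by (rule someI)
  then show "M ** matrix_inv M = mat 1" "matrix_inv M ** M = mat 1" by auto
qed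

lemma matrix_inv_unique:
  assumes "(M::real^'n::finite^'n) ** B = mat 1" "B ** M = mat 1"
  shows "matrix_inv M = B"
proof -
  have inv: "invertible M" using assms unfolding invertible_def by blast
  have "matrix_inv M = matrix_inv M ** (M ** B)" by (simp add: assms)
  also have "\<dots> = B" by (simp add: matrix_mul_assoc matrix_inv_mult[OF inv])
  finally show ?thesis .
qed

lemma invertible_if_quadratic_form_pos:
  assumes "\<And>x. x \<noteq> 0 \<Longrightarrow> 0 < x \<bullet> ((M::real^'n::finite^'n) *v x)"
  shows "invertible M"
proof -
  have "\<forall>x. M *v x = 0 \<longrightarrow> x = 0"
    using assms by force
  then show ?thesis
    using matrix_left_invertible_ker invertible_left_inverse by blast
qed

lemma quadratic_form_le_norm_congruence:
  fixes R N :: "real^'n::finite^'n"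
  assumes "invertible R"
  shows "c \<bullet> (N *v c)
    \<le> norm (transpose (matrix_inv R) ** N ** matrix_inv R) * (c \<bullet> ((transpose R ** R) *v c))"
proof -
  define S where "S = matrix_inv R"
  define v where "v = R *v c"
  have "c = S *v v"
    by (simp add: S_def v_def matrix_vector_mul_assoc matrix_inv_mult[OF assms])
  then have "c \<bullet> (N *v c) = v \<bullet> (transpose S *v (N *v (S *v v)))"
    unfolding inner_transpose_matrix_vector by simp
  also have "\<dots> = (transpose S ** N ** S) \<bullet> outer v v"
    by (simp add: inner_outer matrix_vector_mul_assoc matrix_mul_assoc)
  also have "\<dots> \<le> norm (transpose S ** N ** S) * norm (outer v v)"
    by (rule norm_cauchy_schwarz)
  also have "norm (outer v v) = c \<bullet> (transpose R *v (R *v c))"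
    unfolding norm_outer_self inner_transpose_matrix_vector v_def ..
  also have "\<dots> = c \<bullet> ((transpose R ** R) *v c)"
    by (simp only: matrix_vector_mul_assoc)
  finally show ?thesis by (simp add: S_def)
qed

section \<open>Cholesky factorisation\<close>

definition pos_semidef :: "real^'n::finite^'n \<Rightarrow> bool" where
  "pos_semidef M \<longleftrightarrow> transpose M = M \<and> (\<forall>x. 0 \<le> x \<bullet> (M *v x))"

definition pos_def :: "real^'n::finite^'n \<Rightarrow> bool" where
  "pos_def M \<longleftrightarrow> transpose M = M \<and> (\<forall>x. x \<noteq> 0 \<longrightarrow> 0 < x \<bullet> (M *v x))"

lemma transpose_eq_self_iff: "transpose M = M \<longleftrightarrow> (\<forall>a b. M$a$b = M$b$a)"
  by (auto simp: transpose_def vec_eq_iff)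

lemma pos_def_imp_pos_semidef: "pos_def M \<Longrightarrow> pos_semidef M"
  unfolding pos_def_def pos_semidef_def by (metis inner_zero_left order.refl order_less_imp_le)

lemma matrix_vector_mult_axis_component [simp]: "((M::real^'n::finite^'n) *v axis k 1) $ a = M$a$k"
  by (simp add: matrix_vector_mult_basis column_def)

lemma quadratic_form_axis_combination:
  assumes "transpose M = (M::real^'n::finite^'n)" "j \<noteq> k"
  shows "(t *\<^sub>R axis k 1 + axis j 1) \<bullet> (M *v (t *\<^sub>R axis k 1 + axis j 1))
           = t * t * M$k$k + 2 * t * M$k$j + M$j$j"
  using assms by (simp add: transpose_eq_self_iff inner_axis' algebra_simps)

lemma pos_semidef_diag_eq_0:
  assumes M: "pos_semidef M" and "M$k$k = 0"
  shows "M$k$j = 0"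
proof (rule ccontr)
  assume ne: "M$k$j \<noteq> 0"
  then have "j \<noteq> k" using assms by auto
  define t where "t = - (M$j$j + 1) / (2 * M$k$j)"
  have "0 \<le> (t *\<^sub>R axis k 1 + axis j 1) \<bullet> (M *v (t *\<^sub>R axis k 1 + axis j 1))"
    using M by (simp add: pos_semidef_def)
  also have "\<dots> = t * t * M$k$k + 2 * t * M$k$j + M$j$j"
    using M \<open>j \<noteq> k\<close> unfolding pos_semidef_def by (blast intro: quadratic_form_axis_combination)
  also have "\<dots> = -1"
    using \<open>M$k$k = 0\<close> ne by (simp add: t_def field_simps)
  finally show False by simp
qed

(* If M$k$k = 0 this is M itself, as x / 0 = 0; for positive semidefinite M the k-th row then
   vanishes, so the Cholesky step below needs no case split on the pivot. *)
definition schur_complement :: "real^'n::finite^'n \<Rightarrow> 'n \<Rightarrow> real^'n^'n" where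
  "schur_complement M k = (\<chi> a b. M$a$b - M$a$k * M$k$b / M$k$k)"

lemma quadratic_form_eq_sum: "x \<bullet> (M *v x) = (\<Sum>a\<in>UNIV. \<Sum>b\<in>UNIV. x$a * M$a$b * x$b)"
  by (simp add: inner_vec_def matrix_vector_mult_def sum_distrib_left mult_ac)

lemma quadratic_form_schur_complement:
  assumes "transpose M = (M::real^'n::finite^'n)"
  shows "x \<bullet> (schur_complement M k *v x) = x \<bullet> (M *v x) - ((M *v x)$k)\<^sup>2 / M$k$k"
proof -
  have "x \<bullet> (schur_complement M k *v x) = (\<Sum>a\<in>UNIV. \<Sum>b\<in>UNIV. x$a * M$a$b * x$b)
      - (\<Sum>a\<in>UNIV. \<Sum>b\<in>UNIV. x$a * (M$a$k * M$k$b) * x$b) / M$k$k"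
    by (simp add: quadratic_form_eq_sum schur_complement_def algebra_simps sum_subtractf
        sum_divide_distrib)
  also have "(\<Sum>a\<in>UNIV. \<Sum>b\<in>UNIV. x$a * (M$a$k * M$k$b) * x$b) = ((M *v x)$k)\<^sup>2"
    using assms
    by (simp add: transpose_eq_self_iff matrix_vector_mult_def power2_eq_square sum_product mult_ac)
  finally show ?thesis by (simp add: quadratic_form_eq_sum)
qed

lemma quadratic_form_shift_axis:
  fixes x :: "real^'n::finite" and k :: 'n
  assumes "transpose M = (M::real^'n^'n)"
  defines "\<beta> \<equiv> (M *v x)$k"
  shows "(x - (\<beta> / M$k$k) *\<^sub>R axis k 1) \<bullet> (M *v (x - (\<beta> / M$k$k) *\<^sub>R axis k 1))
           = x \<bullet> (M *v x) - \<beta>\<^sup>2 / M$k$k"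
proof (cases "M$k$k = 0")
  case False
  have "x \<bullet> (M *v axis k 1) = \<beta>"
    using assms(1) unfolding transpose_eq_self_iff
    by (simp add: \<beta>_def inner_vec_def) (simp add: matrix_vector_mult_def mult.commute)
  with False show ?thesis
    by (simp add: matrix_vector_mult_diff_distrib matrix_vector_mult_scaleR inner_diff_left
        inner_diff_right inner_axis' \<beta>_def[symmetric] field_simps power2_eq_square)
qed simp

lemma pos_semidef_schur_complement:
  assumes "pos_semidef M"
  shows "pos_semidef (schur_complement M k)"
proof -
  have sym: "transpose M = M" using assms by (simp add: pos_semidef_def)
  then have "transpose (schur_complement M k) = schur_complement M k"
    by (simp add: transpose_eq_self_iff schur_complement_def mult.commute)
  moreover have "0 \<le> x \<bullet> (schur_complement M k *v x)" for x
  proof -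
    define x' where "x' = x - ((M *v x)$k / M$k$k) *\<^sub>R axis k 1"
    have "0 \<le> x' \<bullet> (M *v x')" using assms by (simp add: pos_semidef_def)
    then show ?thesis
      by (simp add: x'_def quadratic_form_shift_axis[OF sym] quadratic_form_schur_complement[OF sym])
  qed
  ultimately show ?thesis by (simp add: pos_semidef_def)
qed

lemma pos_semidef_sqrt_pivot:
  assumes "pos_semidef M"
  shows "sqrt (M$k$k) * sqrt (M$k$k) = M$k$k" "sqrt (M$k$k) * (M$b$k / sqrt (M$k$k)) = M$b$k"
proof -
  have "0 \<le> axis k 1 \<bullet> (M *v axis k 1)" using assms by (simp add: pos_semidef_def)
  then show "sqrt (M$k$k) * sqrt (M$k$k) = M$k$k" by (simp add: inner_axis')
  have "M$b$k = M$k$b" using assms by (simp add: pos_semidef_def transpose_eq_self_iff)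
  then show "sqrt (M$k$k) * (M$b$k / sqrt (M$k$k)) = M$b$k"
    using pos_semidef_diag_eq_0[OF assms, of k b] by (cases "M$k$k = 0") auto
qed

(* The support condition keeps the Gram vectors orthogonal to the axes of indices added later. *)
definition gram_on :: "'n set \<Rightarrow> real^'n::finite^'n \<Rightarrow> ('n \<Rightarrow> real^'n) \<Rightarrow> bool" where
  "gram_on I M r \<longleftrightarrow> (\<forall>a\<in>I. \<forall>j. j \<notin> I \<longrightarrow> r a $ j = 0) \<and> (\<forall>a\<in>I. \<forall>b\<in>I. M$a$b = r a \<bullet> r b)"

lemma gram_on_insert:
  assumes M: "pos_semidef M" and "k \<notin> I" and r: "gram_on I (schur_complement M k) r"
  defines "s \<equiv> sqrt (M$k$k)"
  shows "gram_on (insert k I) M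
           (\<lambda>a. if a = k then s *\<^sub>R axis k 1 else r a + (M$a$k / s) *\<^sub>R axis k 1)"
    (is "gram_on _ _ ?r'")
proof -
  have sym: "M$a$b = M$b$a" for a b
    using M by (simp add: pos_semidef_def transpose_eq_self_iff)
  have s: "s * s = M$k$k" and row_k: "s * (M$b$k / s) = M$b$k" for b
    using pos_semidef_sqrt_pivot[OF M] by (simp_all add: s_def)
  have rk: "r a $ k = 0" if "a \<in> I" for a
    using r that \<open>k \<notin> I\<close> by (simp add: gram_on_def)
  have gram_I: "M$a$b = r a \<bullet> r b + M$a$k * M$b$k / (s * s)" if "a \<in> I" "b \<in> I" for a b
  proof -
    have "M$a$b - M$a$k * M$k$b / M$k$k = r a \<bullet> r b"
      using r that by (simp add: gram_on_def schur_complement_def)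
    then show ?thesis using s sym[of k b] by (simp add: algebra_simps)
  qed
  show ?thesis
    unfolding gram_on_def
  proof (intro conjI ballI allI impI)
    fix a j assume "a \<in> insert k I" "j \<notin> insert k I"
    then show "?r' a $ j = 0" using r by (auto simp: gram_on_def axis_def)
  next
    fix a b assume "a \<in> insert k I" "b \<in> insert k I"
    then consider "a = k" "b = k" | "a = k" "b \<in> I" "b \<noteq> k" | "a \<in> I" "a \<noteq> k" "b = k"
      | "a \<in> I" "a \<noteq> k" "b \<in> I" "b \<noteq> k"
      by blast
    then show "M$a$b = ?r' a \<bullet> ?r' b"
    proof cases
      case 1
      then show ?thesis using s by (simp add: inner_axis_axis)
    next
      case 2
      then show ?thesis using rk row_k sym[of k b] by (simp add: inner_add_right inner_axis')
    next
      case 3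
      then show ?thesis using rk row_k by (simp add: inner_add_left inner_axis)
    next
      case 4
      then show ?thesis
        using rk gram_I by (simp add: inner_add_left inner_add_right inner_axis inner_axis'
            inner_axis_axis)
    qed
  qed
qed

lemma pos_semidef_gram_on:
  assumes "finite I" "pos_semidef M"
  shows "\<exists>r. gram_on I M r"
  using assms
proof (induction I arbitrary: M rule: finite_induct)
  case empty
  then show ?case by (simp add: gram_on_def)
next
  case (insert k I)
  then obtain r where "gram_on I (schur_complement M k) r"
    using pos_semidef_schur_complement by blast
  then show ?case using gram_on_insert[OF insert.prems insert.hyps(2)] by blast
qed

lemma pos_semidef_factor:
  assumes "pos_semidef (M::real^'n::finite^'n)"
  obtains R :: "real^'n^'n" where "transpose R ** R = M"
proof -
  obtain r where "gram_on UNIV M r" using pos_semidef_gram_on[OF finite_class.finite_UNIV assms] by blast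
  then have "transpose (\<chi> j a. r a $ j) ** (\<chi> j a. r a $ j) = M"
    by (simp add: gram_on_def vec_eq_iff matrix_matrix_mult_def transpose_def inner_vec_def)
  then show ?thesis using that by blast
qed

lemma pos_def_factor:
  assumes "pos_def (M::real^'n::finite^'n)"
  obtains R :: "real^'n^'n" where "invertible R" "transpose R ** R = M"
proof -
  obtain R :: "real^'n^'n" where R: "transpose R ** R = M"
    using pos_semidef_factor pos_def_imp_pos_semidef[OF assms] by blast
  have "x = 0" if "R *v x = 0" for x
  proof -
    have "M *v x = 0" using that by (simp flip: R matrix_vector_mul_assoc)
    then show ?thesis using assms by (force simp: pos_def_def)
  qed
  then have "invertible R"
    using matrix_left_invertible_ker invertible_left_inverse by blast
  with R show ?thesis using that by blast
qed

section \<open>The operator Lambda and the log-det barrier\<close>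

lemma Lam_adj_component: "Lam_adj A S $ u = A u \<bullet> S"
  by (simp add: Lam_adj_def inner_vec_def)

lemma inner_Lam_adj: "Lam_adj A S \<bullet> w = Lam A w \<bullet> S"
  by (simp add: inner_vec_def[of "Lam_adj A S"] Lam_adj_component Lam_def inner_sum_left
      mult.commute)

lemma linear_Lam: "linear (Lam A)"
  by (rule linearI) (simp_all add: Lam_def scaleR_add_left sum.distrib scaleR_sum_right)

lemma linear_Lam_adj: "linear (Lam_adj A)"
  by (rule linearI) (simp_all add: vec_eq_iff Lam_adj_component inner_add_right)

lemma matrix_add_rdistrib: "((B::real^'n::finite^'m::finite) + C) ** D = B ** D + C ** D"
  by (simp add: vec_eq_iff matrix_matrix_mult_def distrib_right sum.distrib)

lemma linear_matrix_sandwich: "linear (\<lambda>N::real^'n::finite^'n. B ** N ** C)"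
  by (rule linearI)
    (simp_all add: matrix_add_ldistrib matrix_add_rdistrib matrix_scalar_ac scalar_matrix_assoc)

lemma hess_mult: "hess A y *v w = hess_apply A y w"
proof -
  have "linear (hess_apply A y)"
    unfolding hess_apply_def
    using linear_compose[OF linear_compose[OF linear_Lam linear_matrix_sandwich] linear_Lam_adj]
    by (simp add: o_def)
  moreover have "hess A y = matrix (hess_apply A y)"
    by (simp add: hess_def matrix_def)
  ultimately show ?thesis by (metis matrix_vector_mul(2))
qed

lemma matrix_inv_gram:
  assumes "invertible (R::real^'n::finite^'n)"
  shows "matrix_inv (transpose R ** R) = matrix_inv R ** transpose (matrix_inv R)"
proof (rule matrix_inv_unique)
  have RS: "R ** matrix_inv R = mat 1" "matrix_inv R ** R = mat 1"
    using matrix_inv_mult[OF assms] by auto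
  then have "transpose R ** transpose (matrix_inv R) = mat 1"
    by (metis matrix_transpose_mul transpose_mat)
  then show "transpose R ** R ** (matrix_inv R ** transpose (matrix_inv R)) = mat 1"
    by (simp add: matrix_mul_assoc RS flip: matrix_mul_assoc[of "transpose R"])
  have "transpose (matrix_inv R) ** transpose R = mat 1"
    using RS by (metis matrix_transpose_mul transpose_mat)
  then show "matrix_inv R ** transpose (matrix_inv R) ** (transpose R ** R) = mat 1"
    by (simp add: matrix_mul_assoc RS flip: matrix_mul_assoc[of "matrix_inv R"])
qed

lemma inner_neg_grad:
  fixes A :: "'u::finite \<Rightarrow> real^'l::finite^'l"
  assumes "transpose (Lam A y) = Lam A y" "invertible (Lam A y)"
  shows "y \<bullet> - grad A y = real CARD('l)"
proof -
  have "y \<bullet> - grad A y = Lam A y \<bullet> matrix_inv (Lam A y)"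
    by (simp add: grad_def inner_commute[of y] inner_Lam_adj)
  also have "\<dots> = real CARD('l)"
    using assms by (simp add: inner_matrix_eq_trace matrix_inv_mult trace_I)
  finally show ?thesis .
qed

lemma quadratic_form_hess:
  fixes A :: "'u::finite \<Rightarrow> real^'l::finite^'l" and R :: "real^'l^'l"
  assumes "invertible R" "transpose R ** R = Lam A y"
  shows "w \<bullet> (hess A y *v w) = (norm (transpose (matrix_inv R) ** Lam A w ** matrix_inv R))\<^sup>2"
proof -
  define S where "S = matrix_inv R"
  define N where "N = Lam A w"
  define X where "X = transpose S ** N ** S"
  have "w \<bullet> (hess A y *v w) = N \<bullet> (S ** transpose S ** N ** (S ** transpose S))"
    by (simp add: hess_mult hess_apply_def inner_commute[of w] inner_Lam_adj N_def S_def
        matrix_inv_gram[OF assms(1)] flip: assms(2))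
  also have "\<dots> = N \<bullet> (S ** (X ** transpose S))"
    by (simp add: X_def matrix_mul_assoc)
  also have "\<dots> = (transpose S ** N) \<bullet> (X ** transpose S)"
    by (rule inner_matrix_mult_left)
  also have "\<dots> = X \<bullet> X"
    by (simp add: inner_matrix_mult_right X_def matrix_mul_assoc)
  finally show ?thesis by (simp add: X_def N_def S_def power2_norm_eq_inner)
qed

lemma inner_sum_list_Lam_adj_outer:
  "x \<bullet> sum_list (map (\<lambda>c. Lam_adj A (outer c c)) cs) = (\<Sum>c\<leftarrow>cs. c \<bullet> (Lam A x *v c))"
  by (induction cs) (simp_all add: inner_add_right inner_commute[of x] inner_Lam_adj inner_outer)

lemma hess_quadratic_form_pos:
  fixes A :: "'u::finite \<Rightarrow> real^'l::finite^'l"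
  assumes "pos_def (Lam A y)" "inj (Lam A)" "w \<noteq> 0"
  shows "0 < w \<bullet> (hess A y *v w)"
proof -
  obtain R :: "real^'l^'l" where R: "invertible R" "transpose R ** R = Lam A y"
    using pos_def_factor[OF assms(1)] by blast
  define S where "S = matrix_inv R"
  have "transpose R ** transpose S = mat 1" "S ** R = mat 1"
    using matrix_inv_mult[OF R(1)] by (auto simp: S_def simp flip: matrix_transpose_mul)
  then have "Lam A w = transpose R ** (transpose S ** Lam A w ** S) ** R"
    by (simp add: matrix_mul_assoc) (simp flip: matrix_mul_assoc)
  moreover have "Lam A w \<noteq> 0"
    using assms(2,3) linear_injective_0[OF linear_Lam] by blast
  ultimately have "transpose S ** Lam A w ** S \<noteq> 0" by auto
  then show ?thesis by (simp add: quadratic_form_hess[OF R] S_def)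
qed

lemma dual_norm_pos_le_inner:
  fixes A :: "'u::finite \<Rightarrow> real^'l::finite^'l"
  assumes y: "pos_def (Lam A y)" and inj: "inj (Lam A)" and "s \<noteq> 0"
    and s: "s = sum_list (map (\<lambda>c. Lam_adj A (outer c c)) cs)"
  shows "0 < dual_norm A y s" "dual_norm A y s \<le> y \<bullet> s"
proof -
  obtain R :: "real^'l^'l" where R: "invertible R" "transpose R ** R = Lam A y"
    using pos_def_factor[OF y] by blast
  define X where "X w = transpose (matrix_inv R) ** Lam A w ** matrix_inv R" for w
  have qf: "w \<bullet> (hess A y *v w) = (norm (X w))\<^sup>2" for w
    using quadratic_form_hess[OF R] by (simp add: X_def)
  have "invertible (hess A y)"
    using hess_quadratic_form_pos[OF y inj] by (rule invertible_if_quadratic_form_pos)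
  define z where "z = matrix_inv (hess A y) *v s"
  have Hz: "hess A y *v z = s"
    using \<open>invertible (hess A y)\<close> by (simp add: z_def matrix_vector_mul_assoc matrix_inv_mult)
  then have "z \<noteq> 0" using \<open>s \<noteq> 0\<close> by auto
  have "s \<bullet> z = (norm (X z))\<^sup>2"
    by (metis Hz inner_commute qf)
  then have dual_norm_eq: "dual_norm A y s = norm (X z)"
    by (simp add: dual_norm_def flip: z_def)
  show "0 < dual_norm A y s"
    using hess_quadratic_form_pos[OF y inj \<open>z \<noteq> 0\<close>] by (simp add: dual_norm_eq qf)
  have "z \<bullet> s = (\<Sum>c\<leftarrow>cs. c \<bullet> (Lam A z *v c))"
    by (simp add: s inner_sum_list_Lam_adj_outer)
  also have "\<dots> \<le> (\<Sum>c\<leftarrow>cs. norm (X z) * (c \<bullet> (Lam A y *v c)))"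
    using quadratic_form_le_norm_congruence[OF R(1)]
    by (intro sum_list_mono) (simp add: X_def R(2))
  also have "\<dots> = norm (X z) * (y \<bullet> s)"
    by (simp add: s inner_sum_list_Lam_adj_outer sum_list_const_mult)
  finally have "(norm (X z))\<^sup>2 \<le> norm (X z) * (y \<bullet> s)"
    by (simp add: Hz flip: qf inner_commute)
  then show "dual_norm A y s \<le> y \<bullet> s"
    using \<open>0 < dual_norm A y s\<close> by (simp add: dual_norm_eq power2_eq_square)
qed

section \<open>Polynomials and coefficient vectors\<close>

lemma pconst_add: "pconst (a + b) = pconst a + pconst b"
  by (simp add: pconst_def single_add)

lemma pconst_mult: "pconst (a * b) = pconst a * pconst b"
  by (simp add: pconst_def mult_single)

lemma pconst_0 [simp]: "pconst 0 = 0"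
  by (simp add: pconst_def)

lemma pconst_sum: "pconst (\<Sum>i\<in>S. f i) = (\<Sum>i\<in>S. pconst (f i))"
  by (induction S rule: infinite_finite_induct) (simp_all add: pconst_add)

lemma keys_pconst_mult: "Poly_Mapping.keys (pconst a * f) \<subseteq> Poly_Mapping.keys f"
  unfolding pconst_def mult_map_scale_conv_mult[symmetric]
  by (auto simp: in_keys_iff map.rep_eq when_def)

lemma tdeg_le_iff: "tdeg f \<le> k \<longleftrightarrow> (\<forall>\<alpha>\<in>Poly_Mapping.keys f. mon_deg \<alpha> \<le> k)"
proof (cases "f = 0")
  case False
  then have "Poly_Mapping.keys f \<noteq> {}" by simp
  with False show ?thesis by (simp add: tdeg_def)
qed (simp add: tdeg_def)

lemma polys_le_iff:
  "f \<in> polys_le n k \<longleftrightarrow>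
     (\<forall>\<alpha>\<in>Poly_Mapping.keys f. Poly_Mapping.keys \<alpha> \<subseteq> {..<n} \<and> mon_deg \<alpha> \<le> k)"
  by (auto simp: polys_le_def in_vars_def tdeg_le_iff)

lemma polys_le_0 [simp]: "0 \<in> polys_le n k"
  by (simp add: polys_le_iff)

lemma polys_le_add: "f \<in> polys_le n k \<Longrightarrow> h \<in> polys_le n k \<Longrightarrow> f + h \<in> polys_le n k"
  using keys_add[of f h] unfolding polys_le_iff by blast

lemma polys_le_pconst_mult: "f \<in> polys_le n k \<Longrightarrow> pconst a * f \<in> polys_le n k"
  using keys_pconst_mult[of a f] unfolding polys_le_iff by blast

lemma polys_le_sum: "(\<And>i. i \<in> S \<Longrightarrow> f i \<in> polys_le n k) \<Longrightarrow> (\<Sum>i\<in>S. f i) \<in> polys_le n k"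
  by (induction S rule: infinite_finite_induct) (auto simp: polys_le_add)

lemma Vspace_0: "0 \<in> Vspace n m g d"
  unfolding Vspace_def by (intro CollectI exI[of _ "\<lambda>i. 0"]) simp

lemma Vspace_add:
  assumes "f \<in> Vspace n m g d" "h \<in> Vspace n m g d"
  shows "f + h \<in> Vspace n m g d"
proof -
  obtain r r' where "\<forall>i<m. r i \<in> polys_le n (2 * d i)" "\<forall>i<m. r' i \<in> polys_le n (2 * d i)"
    and "f = (\<Sum>i<m. g i * r i)" "h = (\<Sum>i<m. g i * r' i)"
    using assms unfolding Vspace_def by blast
  then show ?thesis
    unfolding Vspace_def
    by (intro CollectI exI[of _ "\<lambda>i. r i + r' i"]) (simp add: polys_le_add distrib_left sum.distrib)
qed

lemma Vspace_pconst_mult: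
  assumes "f \<in> Vspace n m g d"
  shows "pconst a * f \<in> Vspace n m g d"
proof -
  obtain r where "\<forall>i<m. r i \<in> polys_le n (2 * d i)" "f = (\<Sum>i<m. g i * r i)"
    using assms unfolding Vspace_def by blast
  then show ?thesis
    unfolding Vspace_def
    by (intro CollectI exI[of _ "\<lambda>i. pconst a * r i"])
      (simp add: polys_le_pconst_mult sum_distrib_left mult.left_commute)
qed

lemma Vspace_sum: "(\<And>i. i \<in> S \<Longrightarrow> f i \<in> Vspace n m g d) \<Longrightarrow> (\<Sum>i\<in>S. f i) \<in> Vspace n m g d"
  by (induction S rule: infinite_finite_induct) (auto simp: Vspace_add Vspace_0)

lemma of_coeffs_add: "of_coeffs q (x + z) = of_coeffs q x + of_coeffs q z"
  by (simp add: of_coeffs_def pconst_add distrib_right sum.distrib)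

lemma of_coeffs_0 [simp]: "of_coeffs q 0 = 0"
  by (simp add: of_coeffs_def)

lemma of_coeffs_sum: "of_coeffs q (\<Sum>i\<in>S. x i) = (\<Sum>i\<in>S. of_coeffs q (x i))"
  by (induction S rule: infinite_finite_induct) (auto simp: of_coeffs_add)

lemma of_coeffs_in_Vspace: "(\<And>u. q u \<in> Vspace n m g d) \<Longrightarrow> of_coeffs q x \<in> Vspace n m g d"
  unfolding of_coeffs_def by (intro Vspace_sum Vspace_pconst_mult)

section \<open>The weighted sum-of-squares cone\<close>

lemma interior_dual_cone_inner_pos:
  assumes "y \<in> interior (dual_cone K)" "s \<in> K" "s \<noteq> 0"
  shows "0 < y \<bullet> s"
proof -
  obtain e where e: "e > 0" "ball y e \<subseteq> dual_cone K"
    using assms(1) mem_interior by blast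
  define y' where "y' = y - (e / 2 / norm s) *\<^sub>R s"
  have "y' \<in> dual_cone K"
    using e assms(3) by (intro subsetD[OF e(2)]) (simp add: y'_def dist_norm)
  then have "0 \<le> y' \<bullet> s" using assms(2) by (simp add: dual_cone_def)
  also have "y' \<bullet> s = y \<bullet> s - e / 2 * norm s"
    using assms(3) by (simp add: y'_def inner_diff_left power2_norm_eq_inner[symmetric] power2_eq_square)
  finally have "e / 2 * norm s \<le> y \<bullet> s" by simp
  moreover have "0 < e / 2 * norm s" using e assms(3) by simp
  ultimately show ?thesis by linarith
qed

lemma orthogonal_set_with_interior_eq_0:
  assumes "x \<in> interior K" "\<And>s. s \<in> K \<Longrightarrow> w \<bullet> s = 0"
  shows "w = 0"
proof (rule ccontr)
  assume "w \<noteq> 0"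
  obtain e where e: "e > 0" "ball x e \<subseteq> K" using assms(1) mem_interior by blast
  define \<delta> where "\<delta> = e / 2 / norm w"
  have "x + \<delta> *\<^sub>R w \<in> K"
    using e \<open>w \<noteq> 0\<close> by (intro subsetD[OF e(2)]) (simp add: \<delta>_def dist_norm)
  then have "w \<bullet> (x + \<delta> *\<^sub>R w) = 0" by (rule assms(2))
  moreover have "w \<bullet> x = 0" using assms interior_subset by blast
  ultimately have "\<delta> * (w \<bullet> w) = 0" by (simp add: inner_add_right)
  then show False using e \<open>w \<noteq> 0\<close> by (simp add: \<delta>_def)
qed

locale wsos_setting =
  fixes n m :: nat and g :: "nat \<Rightarrow> rpoly" and d :: "nat \<Rightarrow> nat"
    and q :: "'u::finite \<Rightarrow> rpoly"
    and blk :: "'l::finite \<Rightarrow> nat" and p :: "'l \<Rightarrow> rpoly"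
    and A :: "'u \<Rightarrow> real^'l^'l"
    and one :: "real^'u"
  assumes g_nz: "\<forall>i<m. g i \<noteq> 0 \<and> in_vars n (g i)"
    and q_in: "\<forall>u. q u \<in> Vspace n m g d"
    and q_basis: "\<forall>f\<in>Vspace n m g d. \<exists>!x. of_coeffs q x = f"
    and blk_range: "\<forall>a. blk a < m"
    and p_in: "\<forall>a. p a \<in> polys_le n (d (blk a))"
    and p_basis: "\<forall>i<m. \<forall>h\<in>polys_le n (d i). \<exists>!c::'l \<Rightarrow> real.
                     (\<forall>a. blk a \<noteq> i \<longrightarrow> c a = 0) \<and> h = (\<Sum>a\<in>UNIV. pconst (c a) * p a)"
    and Lam_coeffs: "\<forall>a b. (\<Sum>u\<in>UNIV. pconst (A u $ a $ b) * q u) =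
                     (if blk a = blk b then g (blk a) * p a * p b else 0)"
    and proper: "proper_cone (Sigma_vec n m g d q)"
    and one_coeffs: "of_coeffs q one = 1"
    and one_int: "one \<in> interior (Sigma_vec n m g d q)"
begin

abbreviation Sig :: "(real^'u) set" where
  "Sig \<equiv> Sigma_vec n m g d q"

lemma inj_of_coeffs: "inj (of_coeffs q)"
  using of_coeffs_in_Vspace q_in q_basis unfolding inj_def by metis

lemma of_coeffs_Lam_adj:
  "of_coeffs q (Lam_adj A S) =
     (\<Sum>a\<in>UNIV. \<Sum>b\<in>UNIV. pconst (S$a$b) * (if blk a = blk b then g (blk a) * p a * p b else 0))"
proof -
  have "of_coeffs q (Lam_adj A S)
      = (\<Sum>u\<in>UNIV. \<Sum>a\<in>UNIV. \<Sum>b\<in>UNIV. pconst (S$a$b) * (pconst (A u$a$b) * q u))"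
    by (simp add: of_coeffs_def Lam_adj_def pconst_sum pconst_mult sum_distrib_left
        sum_distrib_right mult_ac)
  also have "\<dots> = (\<Sum>a\<in>UNIV. \<Sum>b\<in>UNIV. \<Sum>u\<in>UNIV. pconst (S$a$b) * (pconst (A u$a$b) * q u))"
    by (subst sum.swap, rule sum.cong[OF refl], rule sum.swap)
  also have "\<dots> = (\<Sum>a\<in>UNIV. \<Sum>b\<in>UNIV. pconst (S$a$b) *
      (if blk a = blk b then g (blk a) * p a * p b else 0))"
    by (simp add: Lam_coeffs flip: sum_distrib_left)
  finally show ?thesis .
qed

lemma A_symmetric: "A u $ a $ b = A u $ b $ a"
proof -
  have "of_coeffs q (\<chi> u. A u $ a $ b) = of_coeffs q (\<chi> u. A u $ b $ a)"
    unfolding of_coeffs_def vec_lambda_beta Lam_coeffs[rule_format] by (auto simp: mult_ac)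
  then show ?thesis using inj_of_coeffs by (simp add: inj_eq vec_eq_iff)
qed

lemma transpose_Lam: "transpose (Lam A x) = Lam A x"
  by (simp add: transpose_def vec_eq_iff Lam_def A_symmetric)

definition block_poly :: "real^'l \<Rightarrow> nat \<Rightarrow> rpoly" where
  "block_poly c i = (\<Sum>a | blk a = i. pconst (c$a) * p a)"

lemma block_poly_in_polys_le: "block_poly c i \<in> polys_le n (d i)"
  unfolding block_poly_def using p_in by (auto intro!: polys_le_sum polys_le_pconst_mult)

lemma of_coeffs_Lam_adj_outer:
  "of_coeffs q (Lam_adj A (outer c c)) = (\<Sum>i<m. g i * (block_poly c i * block_poly c i))"
proof -
  define f where "f a b = g (blk a) * (pconst (c$a) * p a * (pconst (c$b) * p b))" for a b
  have "of_coeffs q (Lam_adj A (outer c c))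
      = (\<Sum>a\<in>UNIV. \<Sum>b\<in>UNIV. if blk b = blk a then f a b else 0)"
    unfolding of_coeffs_Lam_adj
    by (intro sum.cong refl) (auto simp: outer_def f_def pconst_mult mult_ac)
  also have "\<dots> = (\<Sum>a\<in>UNIV. \<Sum>b | blk b = blk a. f a b)"
    by (rule sum.cong[OF refl], rule sum.inter_filter[of UNIV, simplified, symmetric]) simp
  also have "\<dots> = (\<Sum>i<m. \<Sum>a | blk a = i. \<Sum>b | blk b = i. f a b)"
  proof -
    have "range blk \<subseteq> {..<m}" using blk_range by auto
    then show ?thesis
      using sum.group[of UNIV "{..<m}" blk "\<lambda>a. \<Sum>b | blk b = blk a. f a b"] by simp
  qed
  also have "\<dots> = (\<Sum>i<m. g i * (block_poly c i * block_poly c i))"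
    by (intro sum.cong refl)
      (simp add: block_poly_def f_def sum_distrib_left sum_distrib_right mult_ac)
  finally show ?thesis .
qed

lemma Lam_adj_outer_in_Sigma: "Lam_adj A (outer c c) \<in> Sig"
  unfolding Sigma_vec_def WSOS_def sos_le_def
  using block_poly_in_polys_le of_coeffs_Lam_adj_outer
  by (intro CollectI exI[of _ "\<lambda>i. block_poly c i * block_poly c i"] conjI allI impI exI[of _ "[_]"])
    auto

lemma block_poly_single_block:
  assumes "\<forall>a. blk a \<noteq> i \<longrightarrow> c$a = 0"
  shows "block_poly c j = (if j = i then (\<Sum>a\<in>UNIV. pconst (c$a) * p a) else 0)"
proof (cases "j = i")
  case True
  have "(\<Sum>a | blk a = i. pconst (c$a) * p a) = (\<Sum>a\<in>UNIV. pconst (c$a) * p a)"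
    using assms by (intro sum.mono_neutral_left) auto
  then show ?thesis using True by (simp add: block_poly_def)
next
  case False
  then show ?thesis using assms by (simp add: block_poly_def)
qed

lemma wsos_term_as_Lam_adj_outer:
  assumes "i < m" "h \<in> polys_le n (d i)"
  shows "\<exists>c. of_coeffs q (Lam_adj A (outer c c)) = g i * (h * h)"
proof -
  obtain c where c: "\<forall>a. blk a \<noteq> i \<longrightarrow> c a = 0" "h = (\<Sum>a\<in>UNIV. pconst (c a) * p a)"
    using p_basis assms by blast
  have bp: "block_poly (\<chi> a. c a) j = (if j = i then h else 0)" for j
    using block_poly_single_block[of i "\<chi> a. c a"] c by simp
  have "of_coeffs q (Lam_adj A (outer (\<chi> a. c a) (\<chi> a. c a)))
      = (\<Sum>j<m. if j = i then g i * (h * h) else 0)"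
    unfolding of_coeffs_Lam_adj_outer by (intro sum.cong refl) (simp add: bp)
  also have "\<dots> = g i * (h * h)"
    using assms(1) by simp
  finally show ?thesis by blast
qed

lemma in_Sigma_imp_sum_list_Lam_adj_outer:
  assumes "s \<in> Sig"
  shows "\<exists>cs. s = (\<Sum>c\<leftarrow>cs. Lam_adj A (outer c c))"
proof -
  define P where "P f \<longleftrightarrow> (\<exists>cs. f = of_coeffs q (\<Sum>c\<leftarrow>cs. Lam_adj A (outer c c)))" for f
  have P_0: "P 0" unfolding P_def by (intro exI[of _ "[]"]) simp
  have P_add: "P (f + f')" if f: "P f" and f': "P f'" for f f'
  proof -
    obtain cs cs' where "f = of_coeffs q (\<Sum>c\<leftarrow>cs. Lam_adj A (outer c c))"
      "f' = of_coeffs q (\<Sum>c\<leftarrow>cs'. Lam_adj A (outer c c))"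
      using f f' unfolding P_def by blast
    then show ?thesis unfolding P_def by (intro exI[of _ "cs @ cs'"]) (simp add: of_coeffs_add)
  qed
  have P_sum_list: "(\<forall>x\<in>set xs. P x) \<Longrightarrow> P (sum_list xs)" for xs
    by (induction xs) (auto intro: P_0 P_add)
  have P_sum: "(\<forall>i\<in>I. P (f i)) \<Longrightarrow> P (sum f I)" for f and I :: "nat set"
    by (induction I rule: infinite_finite_induct) (auto intro: P_0 P_add)
  obtain \<sigma> where \<sigma>: "\<forall>i<m. \<sigma> i \<in> sos_le n (d i)" and s: "of_coeffs q s = (\<Sum>i<m. g i * \<sigma> i)"
    using assms unfolding Sigma_vec_def WSOS_def by blast
  have "P (g i * \<sigma> i)" if i: "i < m" for i
  proof -
    obtain hs where hs: "set hs \<subseteq> polys_le n (d i)" "\<sigma> i = (\<Sum>h\<leftarrow>hs. h * h)"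
      using \<sigma> i unfolding sos_le_def by blast
    have "P (g i * (h * h))" if h: "h \<in> set hs" for h
    proof -
      obtain c where "of_coeffs q (Lam_adj A (outer c c)) = g i * (h * h)"
        using wsos_term_as_Lam_adj_outer[OF i] hs(1) h by blast
      then show ?thesis unfolding P_def by (intro exI[of _ "[c]"]) simp
    qed
    then show ?thesis
      using P_sum_list[of "map (\<lambda>h. g i * (h * h)) hs"] by (simp add: hs(2) sum_list_const_mult)
  qed
  then have "P (of_coeffs q s)" unfolding s by (intro P_sum) simp
  then obtain cs where "of_coeffs q s = of_coeffs q (\<Sum>c\<leftarrow>cs. Lam_adj A (outer c c))"
    unfolding P_def by blast
  then show ?thesis using inj_of_coeffs by (blast dest: injD)
qed

definition block_part :: "real^'l \<Rightarrow> nat \<Rightarrow> real^'l" where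
  "block_part c i = (\<chi> a. if blk a = i then c$a else 0)"

lemma block_poly_block_part: "block_poly (block_part c i) j = (if j = i then block_poly c i else 0)"
  by (simp add: block_poly_def block_part_def)

lemma of_coeffs_Lam_adj_outer_block_part:
  assumes "i < m"
  shows "of_coeffs q (Lam_adj A (outer (block_part c i) (block_part c i)))
           = g i * (block_poly c i * block_poly c i)"
proof -
  have "of_coeffs q (Lam_adj A (outer (block_part c i) (block_part c i)))
      = (\<Sum>j<m. if j = i then g i * (block_poly c i * block_poly c i) else 0)"
    unfolding of_coeffs_Lam_adj_outer by (intro sum.cong refl) (simp add: block_poly_block_part)
  then show ?thesis using assms by simp
qed

lemma Lam_adj_outer_eq_sum_block_parts:
  "Lam_adj A (outer c c) = (\<Sum>i<m. Lam_adj A (outer (block_part c i) (block_part c i)))"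
proof (rule injD[OF inj_of_coeffs])
  show "of_coeffs q (Lam_adj A (outer c c))
      = of_coeffs q (\<Sum>i<m. Lam_adj A (outer (block_part c i) (block_part c i)))"
    unfolding of_coeffs_sum of_coeffs_Lam_adj_outer[of c]
    by (intro sum.cong refl) (simp add: of_coeffs_Lam_adj_outer_block_part)
qed

lemma block_poly_eq_0_imp_coeff_eq_0:
  assumes "block_poly c (blk a) = 0"
  shows "c$a = 0"
proof -
  define i where "i = blk a"
  let ?P = "\<lambda>c'::'l \<Rightarrow> real. (\<forall>a. blk a \<noteq> i \<longrightarrow> c' a = 0) \<and> 0 = (\<Sum>a\<in>UNIV. pconst (c' a) * p a)"
  have unique: "\<exists>!c'. ?P c'"
    unfolding i_def by (rule p_basis[rule_format, OF blk_range[rule_format] polys_le_0])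
  have supp: "\<forall>a. blk a \<noteq> i \<longrightarrow> block_part c i $ a = 0"
    by (simp add: block_part_def)
  have "(\<Sum>a\<in>UNIV. pconst (block_part c i $ a) * p a) = block_poly c i"
    using block_poly_single_block[OF supp, of i] by (simp add: block_poly_block_part)
  then have P_block_part: "?P (\<lambda>a'. block_part c i $ a')"
    using supp assms by (simp add: i_def)
  have P_0: "?P (\<lambda>a'. 0)" by simp
  have "(\<lambda>a'. block_part c i $ a') = (\<lambda>a'. 0)"
    using the1_equality[OF unique, of "\<lambda>a'. block_part c i $ a'", OF P_block_part]
      the1_equality[OF unique, of "\<lambda>a'. 0", OF P_0] by simp
  then have "block_part c i $ a = 0" by (simp add: fun_eq_iff)
  then show ?thesis by (simp add: block_part_def i_def)
qed

lemma Lam_adj_outer_block_part_neq_0: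
  assumes "c$a \<noteq> 0"
  shows "Lam_adj A (outer (block_part c (blk a)) (block_part c (blk a))) \<noteq> 0"
proof
  assume "Lam_adj A (outer (block_part c (blk a)) (block_part c (blk a))) = 0"
  then have "g (blk a) * (block_poly c (blk a) * block_poly c (blk a)) = 0"
    by (metis of_coeffs_0 of_coeffs_Lam_adj_outer_block_part blk_range)
  then show False
    using g_nz blk_range block_poly_eq_0_imp_coeff_eq_0 assms by auto
qed

lemma pos_def_Lam_if_interior_dual_cone:
  assumes y: "y \<in> interior (dual_cone Sig)"
  shows "pos_def (Lam A y)"
  unfolding pos_def_def
proof (intro conjI allI impI)
  show "transpose (Lam A y) = Lam A y" by (rule transpose_Lam)
next
  fix c :: "real^'l" assume "c \<noteq> 0"
  then obtain a where "c$a \<noteq> 0" by (auto simp: vec_eq_iff)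
  define F where "F i = y \<bullet> Lam_adj A (outer (block_part c i) (block_part c i))" for i
  have F_nonneg: "0 \<le> F i" for i
    using y interior_subset Lam_adj_outer_in_Sigma by (fastforce simp: F_def dual_cone_def)
  have "0 < F (blk a)"
    unfolding F_def using y Lam_adj_outer_in_Sigma Lam_adj_outer_block_part_neq_0[OF \<open>c$a \<noteq> 0\<close>]
    by (rule interior_dual_cone_inner_pos)
  also have "F (blk a) \<le> (\<Sum>i<m. F i)"
    using blk_range F_nonneg by (intro member_le_sum) auto
  also have "(\<Sum>i<m. F i) = y \<bullet> Lam_adj A (outer c c)"
    unfolding F_def inner_sum_right[symmetric] Lam_adj_outer_eq_sum_block_parts[of c] ..
  also have "\<dots> = c \<bullet> (Lam A y *v c)"
    by (simp add: inner_commute[of y] inner_Lam_adj inner_outer)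
  finally show "0 < c \<bullet> (Lam A y *v c)" .
qed

lemma inj_Lam: "inj (Lam A)"
  unfolding linear_injective_0[OF linear_Lam]
proof (intro allI impI)
  fix w assume "Lam A w = 0"
  have "w \<bullet> s = 0" if "s \<in> Sig" for s
    using in_Sigma_imp_sum_list_Lam_adj_outer[OF that] \<open>Lam A w = 0\<close>
    by (auto simp: inner_sum_list_Lam_adj_outer)
  then show "w = 0" by (rule orthogonal_set_with_interior_eq_0[OF one_int])
qed

lemma optimality_gap_le:
  assumes y: "y \<in> interior (dual_cone Sig)" and boundary: "t - cstar *\<^sub>R one \<in> frontier Sig"
    and "c < cstar" and certificate: "- grad A y = t - c *\<^sub>R one"
  shows "cstar - c \<le> real CARD('l) / dual_norm A y one"
proof -
  have pd: "pos_def (Lam A y)" by (rule pos_def_Lam_if_interior_dual_cone[OF y])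
  obtain cs where one_eq: "one = (\<Sum>c\<leftarrow>cs. Lam_adj A (outer c c))"
    using in_Sigma_imp_sum_list_Lam_adj_outer one_int interior_subset by blast
  have "one \<noteq> 0" using one_coeffs by auto
  note dual_norm = dual_norm_pos_le_inner[OF pd inj_Lam \<open>one \<noteq> 0\<close> one_eq]
  have "invertible (Lam A y)"
    using pd by (intro invertible_if_quadratic_form_pos) (simp add: pos_def_def)
  then have "y \<bullet> (t - c *\<^sub>R one) = real CARD('l)"
    using inner_neg_grad transpose_Lam certificate by metis
  moreover have "0 \<le> y \<bullet> (t - cstar *\<^sub>R one)"
  proof -
    have "closed Sig" using proper by (simp add: proper_cone_def)
    then have "t - cstar *\<^sub>R one \<in> Sig" using boundary frontier_subset_closed by blast
    then show ?thesis using y interior_subset by (fastforce simp: dual_cone_def)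
  qed
  ultimately have "(cstar - c) * (y \<bullet> one) \<le> real CARD('l)"
    by (simp add: inner_diff_right algebra_simps)
  moreover have "(cstar - c) * dual_norm A y one \<le> (cstar - c) * (y \<bullet> one)"
    using dual_norm(2) \<open>c < cstar\<close> by (simp add: mult_left_mono)
  ultimately show ?thesis
    using dual_norm(1) by (simp add: pos_le_divide_eq)
qed

end

theorem theorem2:
  fixes n m :: nat and g :: "nat \<Rightarrow> rpoly" and d :: "nat \<Rightarrow> nat"
    and q :: "'u::finite \<Rightarrow> rpoly"
    and blk :: "'l::finite \<Rightarrow> nat" and p :: "'l \<Rightarrow> rpoly"
    and A :: "'u \<Rightarrow> real^'l^'l"
    and one :: "real^'u"
  assumes g_nz: "\<forall>i<m. g i \<noteq> 0 \<and> in_vars n (g i)"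
    and q_in: "\<forall>u. q u \<in> Vspace n m g d"
    and q_basis: "\<forall>f\<in>Vspace n m g d. \<exists>!x. of_coeffs q x = f"
    and blk_range: "\<forall>a. blk a < m"
    and p_in: "\<forall>a. p a \<in> polys_le n (d (blk a))"
    and p_basis: "\<forall>i<m. \<forall>h\<in>polys_le n (d i). \<exists>!c::'l \<Rightarrow> real.
                     (\<forall>a. blk a \<noteq> i \<longrightarrow> c a = 0) \<and> h = (\<Sum>a\<in>UNIV. pconst (c a) * p a)"
    and Lam_def: "\<forall>a b. (\<Sum>u\<in>UNIV. pconst (A u $ a $ b) * q u) =
                     (if blk a = blk b then g (blk a) * p a * p b else 0)"
    and proper: "proper_cone (Sigma_vec n m g d q)"
    and one_coeffs: "of_coeffs q one = 1"
    and one_int: "one \<in> interior (Sigma_vec n m g d q)"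
  shows "\<exists>C>0. \<forall>(t::real^'u) (cstar::real) (c::real) (y::real^'u).
           t - cstar *\<^sub>R one \<in> frontier (Sigma_vec n m g d q) \<longrightarrow> c < cstar \<longrightarrow>
           y \<in> interior (dual_cone (Sigma_vec n m g d q)) \<longrightarrow>
           - grad A y = t - c *\<^sub>R one \<longrightarrow>
           cstar - c \<le> 1 / (C * dual_norm A y one)"
proof -
  interpret wsos_setting n m g d q blk p A one
    using g_nz q_in q_basis blk_range p_in p_basis Lam_def proper one_coeffs one_int
    by unfold_locales
  show ?thesis
  proof (intro exI[of _ "1 / real CARD('l)"] conjI allI impI)
    fix t :: "real^'u" and cstar c :: real and y :: "real^'u"
    assume "t - cstar *\<^sub>R one \<in> frontier (Sigma_vec n m g d q)" "c < cstar"
      "y \<in> interior (dual_cone (Sigma_vec n m g d q))" "- grad A y = t - c *\<^sub>R one"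
    then have "cstar - c \<le> real CARD('l) / dual_norm A y one"
      by (intro optimality_gap_le)
    then show "cstar - c \<le> 1 / (1 / real CARD('l) * dual_norm A y one)" by simp
  qed simp
qed

end
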